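(* Let $p>2$, $\mathcal{C}=\{x\in\mathbb{R}^m:\|x\|_p\leq1\}$, and let $f:\mathbb{R}^m\to\mathbb{R}$ be convex and $L$-smooth (its gradient is $L$-Lipschitz). Assume there is $c>0$ with $\inf_{x\in\mathcal{C}}\|\nabla f(x)\|>c$, and assume the minimizer $x^*$ of $f$ over $\mathcal{C}$ has all coordinates (in the canonical basis) nonzero. Then the Frank-Wolfe algorithm, run with either exact line-search or short steps, converges linearly: there exist $K>0$ and $\rho\in(0,1)$ such that $f(x_t)-f(x^* )\leq K\rho^t$ for all $t\geq0$.
   Context: The Frank-Wolfe algorithm on $\mathcal{C}$ starts from $x_0\in\mathcal{C}$ and iterates $v_t\in\arg\min_{v\in\mathcal{C}}\langle\nabla f(x_t),v\rangle$, $x_{t+1}=x_t+\gamma_t(v_t-x_t)$, where with exact line-search $\gamma_t\in\arg\min_{\gamma\in[0,1]}f(x_t+\gamma(v_t-x_t))$, and with short steps $\gamma_t=\min\{1,\langle\nabla f(x_t),x_t-v_t\rangle/(L\|v_t-x_t\|^2)\}$ (with $\|\cdot\|$ the norm with respect to which $f$ is $L$-smooth). *)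

theory Defs
  imports "HOL-Analysis.Analysis"
begin

definition lp_norm :: "real \<Rightarrow> real ^ 'm \<Rightarrow> real" where
  "lp_norm p x = (\<Sum>i\<in>UNIV. \<bar>x $ i\<bar> powr p) powr (1 / p)"

definition lp_ball :: "real \<Rightarrow> (real ^ 'm) set" where
  "lp_ball p = {x. lp_norm p x \<le> 1}"

definition fw_lmo :: "(real ^ 'm) set \<Rightarrow> real ^ 'm \<Rightarrow> real ^ 'm \<Rightarrow> bool" where
  "fw_lmo C g v \<longleftrightarrow> v \<in> C \<and> (\<forall>u\<in>C. g \<bullet> v \<le> g \<bullet> u)"

definition exact_ls :: "(real ^ 'm \<Rightarrow> real) \<Rightarrow> real ^ 'm \<Rightarrow> real ^ 'm \<Rightarrow> real \<Rightarrow> bool" where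
  "exact_ls f x v \<gamma> \<longleftrightarrow> \<gamma> \<in> {0..1} \<and>
     (\<forall>g\<in>{0..1}. f (x + \<gamma> *\<^sub>R (v - x)) \<le> f (x + g *\<^sub>R (v - x)))"

definition short_step :: "real \<Rightarrow> real ^ 'm \<Rightarrow> real ^ 'm \<Rightarrow> real ^ 'm \<Rightarrow> real" where
  "short_step L g x v = min 1 ((g \<bullet> (x - v)) / (L * (norm (v - x))\<^sup>2))"

end

theory Submission
  imports Defs
begin

(* Write phi(y) = sum_i |y_i|^p, so that the l_p ball is {phi <= 1}. If every coordinate of the
   minimiser a is nonzero, phi is differentiable at a, and since p > 2 each |y_i|^p lies above its
   tangent at a_i by k (y_i - a_i)^2 on [-1, 1] for some k > 0. As grad f(a) is nonzero, a lies on
   the sphere phi = 1 and grad f(a) is a negative multiple of grad phi(a); together this gives the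
   quadratic growth <grad f(a), y - a> >= kappa |y - a|^2 on the ball. Combined with the gradient
   inequality and co-coercivity of grad f, it bounds |x_t - a|^2 and |v_t - a|^2, hence
   |v_t - x_t|^2, by a multiple of the primal gap h_t <= <grad f(x_t), x_t - v_t>. The short step
   therefore decreases h_t by a fixed fraction, and exact line search does at least as well. *)

section \<open>Convexity of the l_p ball\<close>

lemma convex_on_powr_nonneg:
  fixes p :: real
  assumes "p \<ge> 1"
  shows "convex_on {0..} (\<lambda>x. x powr p)"
proof (rule convex_onI)
  fix t x y :: real
  assume t: "0 < t" "t < 1" and xy: "x \<in> {0..}" "y \<in> {0..}"
  have scale: "(s * z) powr p \<le> s * z powr p" if "0 \<le> s" "s \<le> 1" "0 \<le> z" for s z :: real
  proof -
    have "s powr p \<le> s"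
      using that assms powr_le_one_le[of s p] by (cases "s = 0") auto
    then show ?thesis
      using that by (simp add: powr_mult mult_right_mono)
  qed
  show "((1 - t) *\<^sub>R x + t *\<^sub>R y) powr p \<le> (1 - t) * x powr p + t * y powr p"
  proof (cases "x = 0 \<or> y = 0")
    case True
    then show ?thesis
      using scale[of t y] scale[of "1 - t" x] t xy by auto
  next
    case False
    then show ?thesis
      using convex_onD[OF powr_convex[OF assms], of t x y] t xy by simp
  qed
qed (simp add: convex_real_interval)

lemma convex_on_abs_powr:
  fixes p :: real
  assumes "p \<ge> 1"
  shows "convex_on UNIV (\<lambda>x::real. \<bar>x\<bar> powr p)"
proof (rule convex_onI)
  fix t x y :: real
  assume t: "0 < t" "t < 1"
  have "\<bar>(1 - t) * x + t * y\<bar> powr p \<le> ((1 - t) * \<bar>x\<bar> + t * \<bar>y\<bar>) powr p"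
    using assms t abs_triangle_ineq[of "(1 - t) * x" "t * y"]
    by (intro powr_mono2) (auto simp: abs_mult)
  also have "\<dots> \<le> (1 - t) * \<bar>x\<bar> powr p + t * \<bar>y\<bar> powr p"
    using convex_onD[OF convex_on_powr_nonneg[OF assms], of t "\<bar>x\<bar>" "\<bar>y\<bar>"] t by simp
  finally show "\<bar>(1 - t) *\<^sub>R x + t *\<^sub>R y\<bar> powr p \<le> (1 - t) * \<bar>x\<bar> powr p + t * \<bar>y\<bar> powr p"
    by simp
qed simp

lemma convex_sublevel_set:
  assumes "convex_on UNIV g"
  shows "convex {x. g x \<le> (c::real)}"
proof (rule convexI)
  fix x y and u v :: real
  assume xy: "x \<in> {x. g x \<le> c}" "y \<in> {x. g x \<le> c}" and uv: "0 \<le> u" "0 \<le> v" "u + v = 1"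
  then have u: "u = 1 - v"
    by simp
  have "g ((1 - v) *\<^sub>R x + v *\<^sub>R y) \<le> (1 - v) * g x + v * g y"
    using convex_onD[OF assms, of v x y] uv by simp
  also have "\<dots> \<le> (1 - v) * c + v * c"
    using xy uv by (intro add_mono mult_left_mono) auto
  also have "\<dots> = c"
    by (simp add: algebra_simps)
  finally show "u *\<^sub>R x + v *\<^sub>R y \<in> {x. g x \<le> c}"
    using u by simp
qed

definition lp_powsum :: "real \<Rightarrow> real ^ 'm \<Rightarrow> real" where
  "lp_powsum p x = (\<Sum>i\<in>UNIV. \<bar>x $ i\<bar> powr p)"

lemma lp_powsum_nonneg: "0 \<le> lp_powsum p x"
  unfolding lp_powsum_def by (simp add: sum_nonneg)

lemma convex_on_lp_powsum:
  assumes "p \<ge> 1"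
  shows "convex_on UNIV (lp_powsum p)"
proof (rule convex_onI)
  fix t :: real and x y :: "real ^ 'm"
  assume t: "0 < t" "t < 1"
  have "lp_powsum p ((1 - t) *\<^sub>R x + t *\<^sub>R y) = (\<Sum>i\<in>UNIV. \<bar>(1 - t) * x$i + t * y$i\<bar> powr p)"
    unfolding lp_powsum_def by simp
  also have "\<dots> \<le> (\<Sum>i\<in>UNIV. (1 - t) * \<bar>x$i\<bar> powr p + t * \<bar>y$i\<bar> powr p)"
    using convex_onD[OF convex_on_abs_powr[OF assms], of t] t by (intro sum_mono) simp
  also have "\<dots> = (1 - t) * lp_powsum p x + t * lp_powsum p y"
    unfolding lp_powsum_def by (simp add: sum.distrib sum_distrib_left)
  finally show "lp_powsum p ((1 - t) *\<^sub>R x + t *\<^sub>R y) \<le> (1 - t) * lp_powsum p x + t * lp_powsum p y" .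
qed simp

lemma mem_lp_ball_iff:
  assumes "p > 0"
  shows "x \<in> lp_ball p \<longleftrightarrow> lp_powsum p x \<le> 1"
proof -
  have "lp_powsum p x powr (1 / p) \<le> 1 \<longleftrightarrow> lp_powsum p x \<le> 1"
  proof
    assume "lp_powsum p x \<le> 1"
    then show "lp_powsum p x powr (1 / p) \<le> 1"
      using assms lp_powsum_nonneg[of p x] by (intro powr_le1) simp_all
  qed (use assms gr_one_powr[of "lp_powsum p x" "1 / p"] in fastforce)
  then show ?thesis
    unfolding lp_ball_def lp_norm_def lp_powsum_def by simp
qed

lemma convex_lp_ball:
  assumes "p \<ge> 1"
  shows "convex (lp_ball p :: (real ^ 'm) set)"
proof -
  have "lp_ball p = {x :: real ^ 'm. lp_powsum p x \<le> 1}"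
    using mem_lp_ball_iff[of p] assms by auto
  then show ?thesis
    using convex_sublevel_set[OF convex_on_lp_powsum[OF assms]] by simp
qed

lemma abs_component_le_1_if_mem_lp_ball:
  assumes "p > 0" "x \<in> lp_ball p"
  shows "\<bar>x $ i\<bar> \<le> 1"
proof -
  have "\<bar>x $ i\<bar> powr p \<le> lp_powsum p x"
    unfolding lp_powsum_def by (rule member_le_sum) auto
  also have "\<dots> \<le> 1"
    using assms mem_lp_ball_iff by blast
  finally have "\<bar>x $ i\<bar> powr p \<le> 1" .
  then show ?thesis
    using assms(1) gr_one_powr[of "\<bar>x $ i\<bar>" p] by fastforce
qed

section \<open>Quadratic minorants of the tangents of |y| powr p\<close>

text \<open>For a > 0 the first term is half the least second derivative of y powr p on [a/2, 1].
  For y < a/2 the tangent at a plus (p - 2) a powr (p - 1) (a - y) is still negative at y, and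
  (y - a)^2 \<le> 2 (a - y) turns this slack into the second term.\<close>
definition abs_powr_modulus :: "real \<Rightarrow> real \<Rightarrow> real" where
  "abs_powr_modulus p a = min (p * (p - 1) * (a / 2) powr (p - 2) / 2) ((p - 2) * a powr (p - 1) / 2)"

lemma abs_powr_modulus_pos: "p > 2 \<Longrightarrow> a > 0 \<Longrightarrow> abs_powr_modulus p a > 0"
  unfolding abs_powr_modulus_def by auto

lemma abs_powr_ge_quadratic_minorant_pos:
  fixes a y p :: real
  assumes p: "p > 2" and a: "0 < a" "a \<le> 1" and y: "\<bar>y\<bar> \<le> 1"
  shows "\<bar>y\<bar> powr p \<ge> a powr p + p * a powr (p - 1) * (y - a) + abs_powr_modulus p a * (y - a)\<^sup>2"
proof (cases "y \<ge> a / 2")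
  case True
  define \<mu> where "\<mu> = p * (p - 1) * (a / 2) powr (p - 2) / 2"
  define E where "E s = s powr p - a powr p - p * a powr (p - 1) * (s - a) - \<mu> * (s - a)\<^sup>2" for s
  define E' where "E' s = p * s powr (p - 1) - p * a powr (p - 1) - 2 * \<mu> * (s - a)" for s
  define E'' where "E'' s = p * ((p - 1) * s powr (p - 2)) - 2 * \<mu>" for s
  have dE: "(E has_real_derivative E' s) (at s)" if "s > 0" for s
    unfolding E_def E'_def using that by (auto intro!: derivative_eq_intros simp: algebra_simps)
  have dE': "(E' has_real_derivative E'' s) (at s)" if "s > 0" for s
    unfolding E'_def E''_def using that by (auto intro!: derivative_eq_intros simp: algebra_simps)
  have E''_nonneg: "E'' s \<ge> 0" if "s \<ge> a / 2" for s
  proof -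
    have "(a / 2) powr (p - 2) \<le> s powr (p - 2)"
      using that a p by (intro powr_mono2) auto
    then show ?thesis
      unfolding E''_def \<mu>_def using p by (simp add: mult_left_mono)
  qed
  have at_a: "E' a = 0" "E a = 0"
    unfolding E'_def E_def by auto
  have "E a \<le> E y"
  proof (cases "y \<ge> a")
    case True
    have "E' s \<ge> 0" if "s \<in> {a..y}" for s
      using deriv_nonneg_imp_mono[of a s E' E''] that dE' E''_nonneg a at_a by auto
    then show ?thesis
      using deriv_nonneg_imp_mono[of a y E E'] dE a True by auto
  next
    case False
    have "E' s \<le> 0" if "s \<in> {y..a}" for s
      using deriv_nonneg_imp_mono[of s a E' E''] that dE' E''_nonneg a at_a \<open>y \<ge> a / 2\<close> by auto
    then show ?thesis
      using deriv_nonpos_imp_antimono[of y a E E'] dE a False \<open>y \<ge> a / 2\<close> by auto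
  qed
  then have "y powr p \<ge> a powr p + p * a powr (p - 1) * (y - a) + \<mu> * (y - a)\<^sup>2"
    using at_a unfolding E_def by simp
  moreover have "abs_powr_modulus p a * (y - a)\<^sup>2 \<le> \<mu> * (y - a)\<^sup>2"
    unfolding abs_powr_modulus_def \<mu>_def by (intro mult_right_mono) auto
  moreover have "\<bar>y\<bar> = y"
    using True a by simp
  ultimately show ?thesis
    by linarith
next
  case False
  define A where "A = a powr (p - 1)"
  have A: "A > 0"
    unfolding A_def using a by simp
  have "a powr p = A * a"
    unfolding A_def using a by (simp add: powr_diff)
  have "(y - a)\<^sup>2 \<le> 2 * (a - y)"
  proof -
    have "0 \<le> a - y" "a - y \<le> 2"
      using y a False by auto
    then have "(a - y) * (a - y) \<le> 2 * (a - y)"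
      by (intro mult_right_mono)
    then show ?thesis
      by (simp add: power2_eq_square algebra_simps)
  qed
  then have "abs_powr_modulus p a * (y - a)\<^sup>2 \<le> (p - 2) * A / 2 * (2 * (a - y))"
    unfolding abs_powr_modulus_def A_def using p a by (intro mult_mono) auto
  then have "abs_powr_modulus p a * (y - a)\<^sup>2 \<le> (p - 2) * A * (a - y)"
    by (simp add: algebra_simps)
  moreover have "A * a + p * A * (y - a) + (p - 2) * A * (a - y) = A * (2 * y - a)"
    by (simp add: algebra_simps)
  moreover have "A * (2 * y - a) < 0"
    using A False by (simp add: mult_pos_neg)
  moreover have "a powr p + p * a powr (p - 1) * (y - a) = A * a + p * A * (y - a)"
    using \<open>a powr p = A * a\<close> unfolding A_def by simp
  moreover have "\<bar>y\<bar> powr p \<ge> 0"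
    by simp
  ultimately show ?thesis
    by linarith
qed

lemma abs_powr_ge_quadratic_minorant:
  fixes a y p :: real
  assumes p: "p > 2" and a: "a \<noteq> 0" "\<bar>a\<bar> \<le> 1" and y: "\<bar>y\<bar> \<le> 1"
  shows "\<bar>y\<bar> powr p \<ge> \<bar>a\<bar> powr p + p * (sgn a * \<bar>a\<bar> powr (p - 1)) * (y - a)
                         + abs_powr_modulus p \<bar>a\<bar> * (y - a)\<^sup>2"
proof (cases "a > 0")
  case True
  then show ?thesis
    using abs_powr_ge_quadratic_minorant_pos[OF p True _ y] a by simp
next
  case False
  then have "- a > 0"
    using a by simp
  from abs_powr_ge_quadratic_minorant_pos[OF p this _, of "- y"] a y False
  show ?thesis
    by (simp add: algebra_simps power2_commute)
qed

section \<open>Smooth convex functions\<close>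

lemma has_real_derivative_along_line:
  fixes f :: "'a::real_inner \<Rightarrow> real"
  assumes grad: "\<And>y. (f has_derivative (\<lambda>h. f' y \<bullet> h)) (at y)"
  shows "((\<lambda>s. f (y + s *\<^sub>R d)) has_real_derivative (f' (y + s *\<^sub>R d) \<bullet> d)) (at s)"
proof -
  have "((\<lambda>s. y + s *\<^sub>R d) has_derivative (\<lambda>h. h *\<^sub>R d)) (at s)"
    by (auto intro!: derivative_eq_intros)
  from has_derivative_compose[OF this grad]
  have "((\<lambda>s. f (y + s *\<^sub>R d)) has_derivative (\<lambda>h. h * (f' (y + s *\<^sub>R d) \<bullet> d))) (at s)"
    by simp
  moreover have "(\<lambda>h. h * c) = (*) c" for c :: real
    by (simp add: fun_eq_iff mult.commute)
  ultimately show ?thesis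
    unfolding has_field_derivative_def by simp
qed

lemma convex_gradient_inequality:
  fixes f :: "'a::real_inner \<Rightarrow> real"
  assumes grad: "\<And>y. (f has_derivative (\<lambda>h. f' y \<bullet> h)) (at y)"
    and cvx: "convex_on UNIV f"
  shows "f z \<ge> f y + f' y \<bullet> (z - y)"
proof -
  define g where "g s = f (y + s *\<^sub>R (z - y))" for s
  have "convex_on UNIV g"
  proof (rule convex_onI)
    fix t a b :: real
    assume t: "0 < t" "t < 1"
    have "y + ((1 - t) *\<^sub>R a + t *\<^sub>R b) *\<^sub>R (z - y)
          = (1 - t) *\<^sub>R (y + a *\<^sub>R (z - y)) + t *\<^sub>R (y + b *\<^sub>R (z - y))"
      by (simp add: algebra_simps)
    then show "g ((1 - t) *\<^sub>R a + t *\<^sub>R b) \<le> (1 - t) * g a + t * g b"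
      unfolding g_def using convex_onD[OF cvx, of t] t by simp
  qed simp
  moreover have "(g has_field_derivative (f' y \<bullet> (z - y))) (at 0 within UNIV)"
    using has_real_derivative_along_line[OF grad, of y "z - y" 0] unfolding g_def by simp
  ultimately have "g 1 - g 0 \<ge> (f' y \<bullet> (z - y)) * (1 - 0)"
    by (intro convex_on_imp_above_tangent) auto
  then show ?thesis
    unfolding g_def by simp
qed

lemma lipschitz_gradient_descent_inequality:
  fixes f :: "'a::real_inner \<Rightarrow> real"
  assumes grad: "\<And>y. (f has_derivative (\<lambda>h. f' y \<bullet> h)) (at y)"
    and lipschitz: "\<And>y z. norm (f' y - f' z) \<le> L * norm (y - z)"
    and "s \<ge> 0"
  shows "f (y + s *\<^sub>R d) \<le> f y + s * (f' y \<bullet> d) + L / 2 * s\<^sup>2 * (norm d)\<^sup>2"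
proof -
  define \<psi> where "\<psi> u = f (y + u *\<^sub>R d) - f y - u * (f' y \<bullet> d) - L / 2 * u\<^sup>2 * (norm d)\<^sup>2" for u
  define \<psi>' where "\<psi>' u = f' (y + u *\<^sub>R d) \<bullet> d - f' y \<bullet> d - L * u * (norm d)\<^sup>2" for u
  have "(\<psi> has_real_derivative \<psi>' u) (at u)" for u
    unfolding \<psi>_def \<psi>'_def
    by (rule derivative_eq_intros has_real_derivative_along_line[OF grad] refl | simp)+
  moreover have "\<psi>' u \<le> 0" if "u \<in> {0..s}" for u
  proof -
    have "f' (y + u *\<^sub>R d) \<bullet> d - f' y \<bullet> d = (f' (y + u *\<^sub>R d) - f' y) \<bullet> d"
      by (simp add: inner_diff_left)
    also have "\<dots> \<le> norm (f' (y + u *\<^sub>R d) - f' y) * norm d"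
      by (rule norm_cauchy_schwarz)
    also have "\<dots> \<le> (L * norm (u *\<^sub>R d)) * norm d"
      using lipschitz[of "y + u *\<^sub>R d" y] by (simp add: mult_right_mono)
    also have "\<dots> = L * u * (norm d)\<^sup>2"
      using that by (simp add: power2_eq_square)
    finally show ?thesis
      unfolding \<psi>'_def by simp
  qed
  ultimately have "\<psi> s \<le> \<psi> 0"
    using \<open>s \<ge> 0\<close> by (intro deriv_nonpos_imp_antimono[of 0 s \<psi> \<psi>']) auto
  then show ?thesis
    unfolding \<psi>_def by simp
qed

lemma lipschitz_gradient_sq_le_bregman:
  fixes f :: "'a::real_inner \<Rightarrow> real"
  assumes grad: "\<And>y. (f has_derivative (\<lambda>h. f' y \<bullet> h)) (at y)"
    and cvx: "convex_on UNIV f"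
    and lipschitz: "\<And>y z. norm (f' y - f' z) \<le> L * norm (y - z)"
    and L: "L > 0"
  shows "(norm (f' x - f' a))\<^sup>2 \<le> 2 * L * (f x - f a - f' a \<bullet> (x - a))"
proof -
  define e where "e = f' x - f' a"
  define d where "d = (- (1 / L)) *\<^sub>R e"
  have "f (x + 1 *\<^sub>R d) \<le> f x + 1 * (f' x \<bullet> d) + L / 2 * 1\<^sup>2 * (norm d)\<^sup>2"
    by (rule lipschitz_gradient_descent_inequality[OF grad lipschitz]) simp
  moreover have "f (x + d) \<ge> f a + f' a \<bullet> (x + d - a)"
    by (rule convex_gradient_inequality[OF grad cvx])
  moreover have "f' a \<bullet> (x + d - a) = f' a \<bullet> (x - a) + f' a \<bullet> d"
    by (simp add: algebra_simps inner_add_right inner_diff_right)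
  moreover have "f' a \<bullet> d - f' x \<bullet> d - L / 2 * (norm d)\<^sup>2 = (norm e)\<^sup>2 / (2 * L)"
  proof -
    have "f' a \<bullet> d - f' x \<bullet> d = (1 / L) * (norm e)\<^sup>2"
      unfolding d_def e_def by (simp add: power2_norm_eq_inner inner_diff_left algebra_simps)
    moreover have "(norm d)\<^sup>2 = (norm e)\<^sup>2 / L\<^sup>2"
      unfolding d_def using L by (simp add: power2_eq_square)
    ultimately show ?thesis
      using L by (simp add: field_simps power2_eq_square)
  qed
  ultimately have "(norm e)\<^sup>2 / (2 * L) \<le> f x - f a - f' a \<bullet> (x - a)"
    by simp
  then show ?thesis
    using L unfolding e_def by (simp add: divide_le_eq mult.commute)
qed

lemma directional_derivative_nonneg_at_minimum:
  fixes f :: "'a::real_vector \<Rightarrow> real"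
  assumes deriv: "((\<lambda>s. f (a + s *\<^sub>R w)) has_real_derivative D) (at 0)"
    and feasible: "eventually (\<lambda>s. a + s *\<^sub>R w \<in> S) (at_right 0)"
    and min: "\<And>y. y \<in> S \<Longrightarrow> f a \<le> f y"
  shows "D \<ge> 0"
proof (rule ccontr)
  assume "\<not> D \<ge> 0"
  with DERIV_neg_dec_right[OF deriv] obtain d where "d > 0"
    and decrease: "\<And>h. h > 0 \<Longrightarrow> h < d \<Longrightarrow> f (a + h *\<^sub>R w) < f a"
    by fastforce
  have "eventually (\<lambda>s. s < d) (at_right (0::real))"
    using \<open>d > 0\<close> eventually_at_right_field by blast
  with feasible have "eventually (\<lambda>s. a + s *\<^sub>R w \<in> S \<and> s < d \<and> s > 0) (at_right 0)"
    by (simp add: eventually_at_right_less eventually_conj_iff)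
  then obtain h where "a + h *\<^sub>R w \<in> S" "h < d" "h > 0"
    using eventually_happens trivial_limit_at_right_real by blast
  then show False
    using min decrease by fastforce
qed

section \<open>Quadratic growth at a minimiser on the l_p ball\<close>

lemma has_real_derivative_abs_powr_line:
  fixes a w p :: real
  assumes "a \<noteq> 0"
  shows "((\<lambda>s. \<bar>a + s * w\<bar> powr p) has_real_derivative p * (sgn a * \<bar>a\<bar> powr (p - 1)) * w) (at 0)"
proof -
  define g where "g s = sgn a * (a + s * w)" for s
  have dg: "(g has_real_derivative sgn a * w) (at 0)"
    unfolding g_def by (auto intro!: derivative_eq_intros)
  have "g 0 = \<bar>a\<bar>"
    unfolding g_def by (simp add: sgn_if)
  then have "g 0 > 0"
    using assms by simp
  moreover have "(g \<longlongrightarrow> g 0) (nhds 0)"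
    using DERIV_isCont[OF dg] by (simp add: isCont_def tendsto_at_iff_tendsto_nhds)
  ultimately have "eventually (\<lambda>s. g s > 0) (nhds 0)"
    by (simp add: order_tendstoD(1))
  then have "eventually (\<lambda>s. \<bar>a + s * w\<bar> powr p = g s powr p) (nhds 0)"
    by eventually_elim (auto simp: g_def sgn_if split: if_splits)
  moreover have "((\<lambda>s. g s powr p) has_real_derivative p * (sgn a * \<bar>a\<bar> powr (p - 1)) * w) (at 0)"
    using DERIV_fun_powr[OF dg \<open>g 0 > 0\<close>, of p] \<open>g 0 = \<bar>a\<bar>\<close> by (simp add: mult_ac)
  ultimately show ?thesis
    by (simp add: DERIV_cong_ev)
qed

definition lp_normal :: "real \<Rightarrow> real ^ 'm \<Rightarrow> real ^ 'm" where
  "lp_normal p a = (\<chi> i. sgn (a $ i) * \<bar>a $ i\<bar> powr (p - 1))"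

lemma lp_normal_nonzero:
  assumes "a $ i \<noteq> 0"
  shows "lp_normal p a \<noteq> 0"
proof -
  have "lp_normal p a $ i \<noteq> 0"
    unfolding lp_normal_def using assms by (simp add: sgn_if)
  then show ?thesis
    by (metis zero_index)
qed

lemma has_real_derivative_lp_powsum_line:
  fixes a w :: "real ^ 'm"
  assumes "\<And>i. a $ i \<noteq> 0"
  shows "((\<lambda>s. lp_powsum p (a + s *\<^sub>R w)) has_real_derivative p * (lp_normal p a \<bullet> w)) (at 0)"
proof -
  have "((\<lambda>s. \<Sum>i\<in>UNIV. \<bar>a $ i + s * w $ i\<bar> powr p) has_real_derivative
          (\<Sum>i\<in>UNIV. p * (sgn (a $ i) * \<bar>a $ i\<bar> powr (p - 1)) * w $ i)) (at 0)"
    by (intro DERIV_sum has_real_derivative_abs_powr_line assms)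
  then show ?thesis
    unfolding lp_powsum_def lp_normal_def inner_vec_def
    by (simp add: sum_distrib_left mult.assoc)
qed

lemma inner_nonneg_on_open_halfspace_imp_parallel:
  fixes g n :: "'a::real_inner"
  assumes "n \<noteq> 0" and halfspace: "\<And>w. n \<bullet> w < 0 \<Longrightarrow> g \<bullet> w \<ge> 0"
  shows "\<exists>\<mu>\<le>0. g = \<mu> *\<^sub>R n"
proof -
  have nn: "n \<bullet> n > 0"
    using assms(1) by simp
  define \<mu> where "\<mu> = (g \<bullet> n) / (n \<bullet> n)"
  define u where "u = g - \<mu> *\<^sub>R n"
  have nu: "n \<bullet> u = 0"
    using nn by (simp add: u_def \<mu>_def inner_diff_right inner_commute)
  have gu: "g \<bullet> u = 0"
  proof (rule ccontr)
    assume "g \<bullet> u \<noteq> 0"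
    define t where "t = (g \<bullet> n - 1) / (g \<bullet> u)"
    have "n \<bullet> (t *\<^sub>R u - n) < 0"
      using nu nn by (simp add: inner_diff_right)
    then have "g \<bullet> (t *\<^sub>R u - n) \<ge> 0"
      by (rule halfspace)
    moreover have "g \<bullet> (t *\<^sub>R u - n) = -1"
      using \<open>g \<bullet> u \<noteq> 0\<close> by (simp add: inner_diff_right t_def)
    ultimately show False
      by simp
  qed
  have "u \<bullet> u = 0"
    using gu nu by (simp add: u_def inner_diff_left)
  then have "g = \<mu> *\<^sub>R n"
    by (simp add: u_def)
  moreover have "\<mu> \<le> 0"
    using halfspace[of "- n"] nn by (simp add: \<mu>_def divide_nonpos_pos)
  ultimately show ?thesis
    by blast
qed

lemma lp_powsum_ge_tangent_plus_quadratic: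
  fixes a :: "real ^ 'm"
  assumes p: "p > 2" and a: "a \<in> lp_ball p" "\<And>i. a $ i \<noteq> 0"
  shows "\<exists>k>0. \<forall>y\<in>lp_ball p.
           lp_powsum p y \<ge> lp_powsum p a + p * (lp_normal p a \<bullet> (y - a)) + k * (norm (y - a))\<^sup>2"
proof -
  have p0: "p > 0"
    using p by simp
  define k where "k = Min (range (\<lambda>i. abs_powr_modulus p \<bar>a $ i\<bar>))"
  have "k > 0"
    unfolding k_def using abs_powr_modulus_pos[OF p] a(2) by (subst Min_gr_iff) auto
  moreover have "lp_powsum p y \<ge> lp_powsum p a + p * (lp_normal p a \<bullet> (y - a)) + k * (norm (y - a))\<^sup>2"
    if y: "y \<in> lp_ball p" for y
  proof -
    have "\<bar>y $ i\<bar> powr p \<ge> \<bar>a $ i\<bar> powr p + p * (lp_normal p a $ i) * (y $ i - a $ i) + k * (y $ i - a $ i)\<^sup>2"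
      for i
    proof -
      have "k \<le> abs_powr_modulus p \<bar>a $ i\<bar>"
        unfolding k_def by (rule Min_le) auto
      then have "k * (y $ i - a $ i)\<^sup>2 \<le> abs_powr_modulus p \<bar>a $ i\<bar> * (y $ i - a $ i)\<^sup>2"
        by (intro mult_right_mono) auto
      moreover have "\<bar>a $ i\<bar> \<le> 1" "\<bar>y $ i\<bar> \<le> 1"
        using abs_component_le_1_if_mem_lp_ball[OF p0 a(1)] abs_component_le_1_if_mem_lp_ball[OF p0 y]
        by simp_all
      note abs_powr_ge_quadratic_minorant[OF p a(2) this]
      moreover have "p * lp_normal p a $ i * (y $ i - a $ i)
          = p * (sgn (a $ i) * \<bar>a $ i\<bar> powr (p - 1)) * (y $ i - a $ i)"
        unfolding lp_normal_def by simp
      ultimately show ?thesis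
        by linarith
    qed
    then have "(\<Sum>i\<in>UNIV. \<bar>a $ i\<bar> powr p + p * (lp_normal p a $ i) * (y $ i - a $ i)
                               + k * (y $ i - a $ i)\<^sup>2) \<le> lp_powsum p y"
      unfolding lp_powsum_def by (intro sum_mono)
    moreover have "(\<Sum>i\<in>UNIV. \<bar>a $ i\<bar> powr p + p * (lp_normal p a $ i) * (y $ i - a $ i)
                               + k * (y $ i - a $ i)\<^sup>2)
        = lp_powsum p a + p * (lp_normal p a \<bullet> (y - a)) + k * (norm (y - a))\<^sup>2"
      unfolding lp_powsum_def power2_norm_eq_inner inner_vec_def
      by (simp add: sum.distrib sum_distrib_left mult.assoc power2_eq_square)
    ultimately show ?thesis
      by simp
  qed
  ultimately show ?thesis
    by blast
qed

locale lp_ball_minimizer =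
  fixes p :: real and f :: "real ^ 'm \<Rightarrow> real" and f' :: "real ^ 'm \<Rightarrow> real ^ 'm" and a :: "real ^ 'm"
  assumes p_gt_2: "p > 2"
    and has_gradient: "\<And>y. (f has_derivative (\<lambda>h. f' y \<bullet> h)) (at y)"
    and minimizer_in_ball: "a \<in> lp_ball p"
    and minimizer: "\<And>y. y \<in> lp_ball p \<Longrightarrow> f a \<le> f y"
    and components_nonzero: "\<And>i. a $ i \<noteq> 0"
    and gradient_nonzero: "f' a \<noteq> 0"
begin

lemma gradient_inner_nonneg_if_feasible:
  assumes "eventually (\<lambda>s. a + s *\<^sub>R w \<in> lp_ball p) (at_right 0)"
  shows "f' a \<bullet> w \<ge> 0"
  using has_real_derivative_along_line[OF has_gradient, of a w 0] assms minimizer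
  by (intro directional_derivative_nonneg_at_minimum) auto

lemma lp_powsum_line_deriv:
  "((\<lambda>s. lp_powsum p (a + s *\<^sub>R w)) has_real_derivative p * (lp_normal p a \<bullet> w)) (at 0)"
  using has_real_derivative_lp_powsum_line components_nonzero by blast

lemma minimizer_on_sphere: "lp_powsum p a = 1"
proof (rule ccontr)
  have p: "p > 0"
    using p_gt_2 by simp
  assume "lp_powsum p a \<noteq> 1"
  moreover have "lp_powsum p a \<le> 1"
    using minimizer_in_ball mem_lp_ball_iff[OF p] by blast
  ultimately have "lp_powsum p a < 1"
    by simp
  have "f' a \<bullet> w \<ge> 0" for w
  proof (rule gradient_inner_nonneg_if_feasible)
    have "((\<lambda>s. lp_powsum p (a + s *\<^sub>R w)) \<longlongrightarrow> lp_powsum p a) (at_right 0)"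
      using DERIV_isCont[OF lp_powsum_line_deriv, of w]
      by (auto simp: isCont_def intro: tendsto_mono at_le)
    from order_tendstoD(2)[OF this \<open>lp_powsum p a < 1\<close>]
    show "eventually (\<lambda>s. a + s *\<^sub>R w \<in> lp_ball p) (at_right 0)"
      by eventually_elim (simp add: mem_lp_ball_iff[OF p])
  qed
  from this[of "- f' a"] have "f' a \<bullet> f' a \<le> 0"
    by simp
  then show False
    using gradient_nonzero inner_gt_zero_iff[of "f' a"] by linarith
qed

lemma gradient_negative_multiple_of_normal: "\<exists>\<mu><0. f' a = \<mu> *\<^sub>R lp_normal p a"
proof -
  have p: "p > 0"
    using p_gt_2 by simp
  have "f' a \<bullet> w \<ge> 0" if "lp_normal p a \<bullet> w < 0" for w
  proof (rule gradient_inner_nonneg_if_feasible)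
    have "p * (lp_normal p a \<bullet> w) < 0"
      using p that by (simp add: mult_pos_neg)
    from DERIV_neg_dec_right[OF lp_powsum_line_deriv this] obtain d where "d > 0"
      and "\<And>h. h > 0 \<Longrightarrow> h < d \<Longrightarrow> lp_powsum p (a + h *\<^sub>R w) < lp_powsum p a"
      by fastforce
    then have "eventually (\<lambda>s. lp_powsum p (a + s *\<^sub>R w) < lp_powsum p a) (at_right 0)"
      by (auto simp: eventually_at_right_field)
    then show "eventually (\<lambda>s. a + s *\<^sub>R w \<in> lp_ball p) (at_right 0)"
      by eventually_elim (simp add: minimizer_on_sphere mem_lp_ball_iff[OF p])
  qed
  then obtain \<mu> where "\<mu> \<le> 0" "f' a = \<mu> *\<^sub>R lp_normal p a"
    using inner_nonneg_on_open_halfspace_imp_parallel lp_normal_nonzero components_nonzero by metis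
  moreover have "\<mu> \<noteq> 0"
    using gradient_nonzero \<open>f' a = \<mu> *\<^sub>R lp_normal p a\<close> by auto
  ultimately show ?thesis
    by (intro exI[of _ \<mu>]) auto
qed


lemma gradient_quadratic_growth:
  "\<exists>\<kappa>>0. \<forall>y\<in>lp_ball p. \<kappa> * (norm (y - a))\<^sup>2 \<le> f' a \<bullet> (y - a)"
proof -
  have p: "p > 0"
    using p_gt_2 by simp
  obtain \<mu> where "\<mu> < 0" and gradient: "f' a = \<mu> *\<^sub>R lp_normal p a"
    using gradient_negative_multiple_of_normal by blast
  obtain k where "k > 0" and k: "\<And>y. y \<in> lp_ball p \<Longrightarrow>
      lp_powsum p y \<ge> lp_powsum p a + p * (lp_normal p a \<bullet> (y - a)) + k * (norm (y - a))\<^sup>2"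
    using lp_powsum_ge_tangent_plus_quadratic[OF p_gt_2 minimizer_in_ball components_nonzero] by blast
  have "(- \<mu>) * k / p * (norm (y - a))\<^sup>2 \<le> f' a \<bullet> (y - a)" if y: "y \<in> lp_ball p" for y
  proof -
    have "lp_powsum p y \<le> 1"
      using y mem_lp_ball_iff[OF p] by blast
    then have "k * (norm (y - a))\<^sup>2 \<le> - (p * (lp_normal p a \<bullet> (y - a)))"
      using k[OF y] minimizer_on_sphere by linarith
    then have "(- \<mu>) / p * (k * (norm (y - a))\<^sup>2) \<le> (- \<mu>) / p * (- (p * (lp_normal p a \<bullet> (y - a))))"
      using \<open>\<mu> < 0\<close> p by (intro mult_left_mono) (auto simp: divide_nonpos_pos)
    also have "\<dots> = f' a \<bullet> (y - a)"
      using p by (simp add: gradient)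
    finally show ?thesis
      by simp
  qed
  moreover have "(- \<mu>) * k / p > 0"
    using \<open>\<mu> < 0\<close> \<open>k > 0\<close> p by (simp add: divide_neg_pos mult_neg_pos)
  ultimately show ?thesis
    by blast
qed

end

section \<open>Linear convergence of Frank-Wolfe under quadratic growth\<close>

lemma short_step_objective_bound:
  fixes G D L B :: real
  assumes G: "0 \<le> G" and D: "0 \<le> D" and L: "0 < L" and B: "0 < B"
    and DG: "D \<le> B * G" "D = 0 \<Longrightarrow> G = 0"
  defines "s \<equiv> min 1 (G / (L * D))"
  shows "- s * G + L / 2 * s\<^sup>2 * D \<le> - min (1 / 2) (1 / (2 * L * B)) * G"
proof (cases "D = 0")
  case True
  then show ?thesis
    using DG(2) by simp
next
  case False
  then have "D > 0"
    using D by simp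
  show ?thesis
  proof (cases "G \<ge> L * D")
    case True
    then have "s = 1"
      unfolding s_def using \<open>D > 0\<close> L by (simp add: le_divide_eq)
    then have "- s * G + L / 2 * s\<^sup>2 * D \<le> - (1 / 2) * G"
      using True by simp
    also have "\<dots> \<le> - min (1 / 2) (1 / (2 * L * B)) * G"
      using G by (intro mult_right_mono) auto
    finally show ?thesis .
  next
    case False
    then have "s = G / (L * D)"
      unfolding s_def using \<open>D > 0\<close> L by (simp add: divide_less_eq)
    then have "- s * G + L / 2 * s\<^sup>2 * D = - (G * G / (2 * L * D))"
      using \<open>D > 0\<close> L by (simp add: field_simps power2_eq_square)
    also have "\<dots> \<le> - (G * D / (2 * L * D * B))"
    proof -
      have "D * G \<le> B * (G * G)"
        using mult_right_mono[OF DG(1) G] by (simp add: mult.assoc)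
      then show ?thesis
        using \<open>D > 0\<close> L B by (simp add: field_simps)
    qed
    also have "\<dots> = - (1 / (2 * L * B)) * G"
      using \<open>D > 0\<close> by simp
    also have "\<dots> \<le> - min (1 / 2) (1 / (2 * L * B)) * G"
      using G by (intro mult_right_mono) auto
    finally show ?thesis .
  qed
qed

lemma geometric_decay:
  fixes h :: "nat \<Rightarrow> real"
  assumes "\<And>t. h t \<ge> 0" and "\<And>t. h (Suc t) \<le> r * h t" and "0 < r" "r < 1"
  shows "\<exists>K>0. \<exists>\<rho>. 0 < \<rho> \<and> \<rho> < 1 \<and> (\<forall>t. h t \<le> K * \<rho> ^ t)"
proof -
  have "h t \<le> h 0 * r ^ t" for t
  proof (induction t)
    case (Suc t)
    have "h (Suc t) \<le> r * h t"
      by (rule assms(2))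
    also have "\<dots> \<le> r * (h 0 * r ^ t)"
      using Suc \<open>0 < r\<close> by (intro mult_left_mono) auto
    finally show ?case
      by (simp add: algebra_simps)
  qed simp
  then have "h t \<le> (h 0 + 1) * r ^ t" for t
    using order_trans[OF _ mult_right_mono[of "h 0" "h 0 + 1" "r ^ t"]] \<open>0 < r\<close> by simp
  moreover have "h 0 + 1 > 0"
    using assms(1)[of 0] by simp
  ultimately show ?thesis
    using assms(3,4) by blast
qed

locale frank_wolfe =
  fixes f :: "real ^ 'm \<Rightarrow> real" and f' :: "real ^ 'm \<Rightarrow> real ^ 'm" and L :: real
    and C :: "(real ^ 'm) set" and x v :: "nat \<Rightarrow> real ^ 'm" and \<gamma> :: "nat \<Rightarrow> real"
  assumes has_gradient: "\<And>y. (f has_derivative (\<lambda>h. f' y \<bullet> h)) (at y)"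
    and convex_f: "convex_on UNIV f"
    and L_pos: "L > 0"
    and gradient_lipschitz: "\<And>y z. norm (f' y - f' z) \<le> L * norm (y - z)"
    and convex_C: "convex C"
    and start_in_C: "x 0 \<in> C"
    and lmo: "\<And>t. fw_lmo C (f' (x t)) (v t)"
    and update: "\<And>t. x (Suc t) = x t + \<gamma> t *\<^sub>R (v t - x t)"
    and step_rule: "(\<forall>t. exact_ls f (x t) (v t) (\<gamma> t)) \<or>
                    (\<forall>t. \<gamma> t = short_step L (f' (x t)) (x t) (v t))"
begin

definition fw_gap :: "nat \<Rightarrow> real" where
  "fw_gap t = f' (x t) \<bullet> (x t - v t)"

lemma vertex_in_C: "v t \<in> C"
  using lmo unfolding fw_lmo_def by blast

lemma fw_gap_ge: "y \<in> C \<Longrightarrow> f' (x t) \<bullet> (x t - y) \<le> fw_gap t"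
  using lmo[of t] unfolding fw_lmo_def fw_gap_def by (simp add: inner_diff_right)

lemma short_step_in_unit: "x t \<in> C \<Longrightarrow> short_step L (f' (x t)) (x t) (v t) \<in> {0..1}"
  using fw_gap_ge[of "x t" t] L_pos unfolding short_step_def fw_gap_def by auto

lemma iterate_in_C: "x t \<in> C"
proof (induction t)
  case (Suc t)
  then have "\<gamma> t \<in> {0..1}"
    using step_rule short_step_in_unit unfolding exact_ls_def by auto
  moreover have "x (Suc t) = (1 - \<gamma> t) *\<^sub>R x t + \<gamma> t *\<^sub>R v t"
    by (simp add: update algebra_simps)
  ultimately show ?case
    using convex_C Suc vertex_in_C unfolding convex_def by auto
qed (rule start_in_C)

lemma fw_gap_nonneg: "fw_gap t \<ge> 0"
  using fw_gap_ge[OF iterate_in_C[of t], of t] by simp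

lemma suboptimality_le_fw_gap: "y \<in> C \<Longrightarrow> f (x t) - f y \<le> fw_gap t"
  using convex_gradient_inequality[OF has_gradient convex_f, of "x t" y] fw_gap_ge[of y t]
  by (simp add: inner_diff_right)

text \<open>Exact line search does at least as well as the short step, which lies in [0, 1].\<close>
lemma objective_le_short_step:
  "f (x (Suc t)) \<le> f (x t + short_step L (f' (x t)) (x t) (v t) *\<^sub>R (v t - x t))"
  using step_rule short_step_in_unit[OF iterate_in_C] unfolding exact_ls_def update by auto

lemma short_step_decrease:
  assumes "B > 0" and "(norm (v t - x t))\<^sup>2 \<le> B * fw_gap t"
  shows "f (x (Suc t)) \<le> f (x t) - min (1 / 2) (1 / (2 * L * B)) * fw_gap t"
proof -
  define D where "D = (norm (v t - x t))\<^sup>2"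
  define s where "s = short_step L (f' (x t)) (x t) (v t)"
  have s: "s = min 1 (fw_gap t / (L * D))" and "s \<ge> 0"
    using short_step_in_unit[OF iterate_in_C]
    unfolding s_def D_def short_step_def fw_gap_def by auto
  have gradient_direction: "f' (x t) \<bullet> (v t - x t) = - fw_gap t"
    unfolding fw_gap_def by (simp add: inner_diff_right)
  have "f (x (Suc t)) \<le> f (x t + s *\<^sub>R (v t - x t))"
    unfolding s_def by (rule objective_le_short_step)
  also have "\<dots> \<le> f (x t) + (- s * fw_gap t + L / 2 * s\<^sup>2 * D)"
    using lipschitz_gradient_descent_inequality[OF has_gradient gradient_lipschitz \<open>s \<ge> 0\<close>,
        of "x t" "v t - x t"]
    unfolding D_def gradient_direction by simp
  also have "\<dots> \<le> f (x t) - min (1 / 2) (1 / (2 * L * B)) * fw_gap t"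
  proof -
    have "D = 0 \<Longrightarrow> fw_gap t = 0"
      unfolding D_def fw_gap_def by simp
    from short_step_objective_bound[OF fw_gap_nonneg _ L_pos \<open>B > 0\<close> assms(2)[folded D_def] this]
    show ?thesis
      unfolding s D_def by simp
  qed
  finally show ?thesis .
qed

end

locale frank_wolfe_quadratic_growth = frank_wolfe +
  fixes a and \<kappa> :: real
  assumes anchor_in_C: "a \<in> C"
    and \<kappa>_pos: "\<kappa> > 0"
    and quadratic_growth: "\<And>y. y \<in> C \<Longrightarrow> \<kappa> * (norm (y - a))\<^sup>2 \<le> f' a \<bullet> (y - a)"
begin

lemma objective_ge_tangent: "f' a \<bullet> (y - a) \<le> f y - f a"
  using convex_gradient_inequality[OF has_gradient convex_f, of a y] by simp

lemma sq_dist_iterate_le: "\<kappa> * (norm (x t - a))\<^sup>2 \<le> f (x t) - f a"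
  using quadratic_growth[OF iterate_in_C] objective_ge_tangent by (rule order_trans)

lemma sq_dist_vertex_le: "\<kappa>\<^sup>2 * (norm (v t - a))\<^sup>2 \<le> 2 * L * (f (x t) - f a)"
proof -
  define e where "e = f' (x t) - f' a"
  have "\<kappa> * (norm (v t - a))\<^sup>2 \<le> f' a \<bullet> (v t - a) - f' (x t) \<bullet> (v t - a)"
    using quadratic_growth[OF vertex_in_C, of t] fw_gap_ge[OF anchor_in_C, of t]
    by (simp add: fw_gap_def inner_diff_right)
  also have "\<dots> \<le> norm e * norm (v t - a)"
    using norm_cauchy_schwarz[of "- e" "v t - a"] unfolding e_def
    by (simp add: inner_diff_left norm_minus_commute)
  finally have "\<kappa> * norm (v t - a) \<le> norm e"
    by (cases "v t = a") (simp_all add: power2_eq_square)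
  then have "(\<kappa> * norm (v t - a))\<^sup>2 \<le> (norm e)\<^sup>2"
    using \<kappa>_pos by (intro power_mono) auto
  also have "\<dots> \<le> 2 * L * (f (x t) - f a - f' a \<bullet> (x t - a))"
    unfolding e_def by (rule lipschitz_gradient_sq_le_bregman[OF has_gradient convex_f gradient_lipschitz L_pos])
  also have "\<dots> \<le> 2 * L * (f (x t) - f a)"
    using order_trans[OF mult_nonneg_nonneg[OF less_imp_le[OF \<kappa>_pos] zero_le_power2]
        quadratic_growth[OF iterate_in_C, of t]] L_pos
    by (intro mult_left_mono) auto
  finally show ?thesis
    by (simp add: power_mult_distrib)
qed

lemma sq_norm_direction_le:
  "(norm (v t - x t))\<^sup>2 \<le> (2 / \<kappa> + 4 * L / \<kappa>\<^sup>2) * (f (x t) - f a)"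
proof -
  have "norm (v t - x t) \<le> norm (v t - a) + norm (x t - a)"
    using norm_triangle_ineq4[of "v t - a" "x t - a"] by simp
  then have "(norm (v t - x t))\<^sup>2 \<le> (norm (v t - a) + norm (x t - a))\<^sup>2"
    by (intro power_mono) auto
  also have "\<dots> \<le> 2 * (norm (v t - a))\<^sup>2 + 2 * (norm (x t - a))\<^sup>2"
    using zero_le_power2[of "norm (v t - a) - norm (x t - a)"]
    by (simp add: power2_eq_square algebra_simps)
  also have "\<dots> \<le> 2 * (2 * L * (f (x t) - f a) / \<kappa>\<^sup>2) + 2 * ((f (x t) - f a) / \<kappa>)"
  proof -
    have "(norm (v t - a))\<^sup>2 \<le> 2 * L * (f (x t) - f a) / \<kappa>\<^sup>2"
      using sq_dist_vertex_le[of t] \<kappa>_pos by (simp add: le_divide_eq mult.commute)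
    moreover have "(norm (x t - a))\<^sup>2 \<le> (f (x t) - f a) / \<kappa>"
      using sq_dist_iterate_le[of t] \<kappa>_pos by (simp add: le_divide_eq mult.commute)
    ultimately show ?thesis
      by linarith
  qed
  also have "\<dots> = (2 / \<kappa> + 4 * L / \<kappa>\<^sup>2) * (f (x t) - f a)"
    by (simp add: field_simps)
  finally show ?thesis .
qed

lemma linear_convergence:
  "\<exists>K>0. \<exists>\<rho>. 0 < \<rho> \<and> \<rho> < 1 \<and> (\<forall>t. f (x t) - f a \<le> K * \<rho> ^ t)"
proof (rule geometric_decay)
  define B where "B = 2 / \<kappa> + 4 * L / \<kappa>\<^sup>2"
  define \<epsilon> where "\<epsilon> = min (1 / 2) (1 / (2 * L * B))"
  have "B > 0"
    unfolding B_def using \<kappa>_pos L_pos by (intro add_pos_pos divide_pos_pos) auto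
  then show "0 < 1 - \<epsilon>" "1 - \<epsilon> < 1"
    unfolding \<epsilon>_def using L_pos by auto
  show "f (x t) - f a \<ge> 0" for t
    using order_trans[OF mult_nonneg_nonneg[OF less_imp_le[OF \<kappa>_pos] zero_le_power2]
        sq_dist_iterate_le[of t]] .
  show "f (x (Suc t)) - f a \<le> (1 - \<epsilon>) * (f (x t) - f a)" for t
  proof -
    have "(norm (v t - x t))\<^sup>2 \<le> B * fw_gap t"
      using order_trans[OF sq_norm_direction_le[of t, folded B_def]
          mult_left_mono[OF suboptimality_le_fw_gap[OF anchor_in_C] less_imp_le[OF \<open>B > 0\<close>]]] .
    from short_step_decrease[OF \<open>B > 0\<close> this]
    have "f (x (Suc t)) \<le> f (x t) - \<epsilon> * fw_gap t"
      unfolding \<epsilon>_def .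
    moreover have "\<epsilon> * (f (x t) - f a) \<le> \<epsilon> * fw_gap t"
      using suboptimality_le_fw_gap[OF anchor_in_C, of t] \<open>0 < 1 - \<epsilon>\<close> \<open>B > 0\<close> L_pos
      unfolding \<epsilon>_def by (intro mult_left_mono) auto
    ultimately show ?thesis
      by (simp add: algebra_simps)
  qed
qed

end

theorem mainTheorem3:
  fixes p L c :: real
    and f :: "real ^ 'm \<Rightarrow> real"
    and f' :: "real ^ 'm \<Rightarrow> real ^ 'm"
    and xstar :: "real ^ 'm"
    and x v :: "nat \<Rightarrow> real ^ 'm"
    and \<gamma> :: "nat \<Rightarrow> real"
  assumes p: "p > 2"
    and grad: "\<And>y. (f has_derivative (\<lambda>h. f' y \<bullet> h)) (at y)"
    and cvx: "convex_on UNIV f"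
    and L: "L > 0"
    and smooth: "\<And>y z. norm (f' y - f' z) \<le> L * norm (y - z)"
    and c: "c > 0"
    and gradbd: "(INF y\<in>lp_ball p. norm (f' y)) > c"
    and xstar_min: "xstar \<in> lp_ball p" "\<And>y. y \<in> lp_ball p \<Longrightarrow> f xstar \<le> f y"
    and xstar_nz: "\<And>i. xstar $ i \<noteq> 0"
    and x0: "x 0 \<in> lp_ball p"
    and lmo: "\<And>t. fw_lmo (lp_ball p) (f' (x t)) (v t)"
    and upd: "\<And>t. x (Suc t) = x t + \<gamma> t *\<^sub>R (v t - x t)"
    and steps: "(\<forall>t. exact_ls f (x t) (v t) (\<gamma> t)) \<or>
                (\<forall>t. \<gamma> t = short_step L (f' (x t)) (x t) (v t))"
  shows "\<exists>K > 0. \<exists>\<rho>. 0 < \<rho> \<and> \<rho> < 1 \<and> (\<forall>t. f (x t) - f xstar \<le> K * \<rho> ^ t)"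
proof -
  have "(INF y\<in>lp_ball p. norm (f' y)) \<le> norm (f' xstar)"
    using xstar_min(1) by (intro cINF_lower) (auto intro: bdd_belowI[of _ 0])
  then have "f' xstar \<noteq> 0"
    using gradbd c by auto
  with p grad xstar_min xstar_nz interpret lp_ball_minimizer p f f' xstar
    by unfold_locales
  obtain \<kappa> where "\<kappa> > 0" and "\<And>y. y \<in> lp_ball p \<Longrightarrow> \<kappa> * (norm (y - xstar))\<^sup>2 \<le> f' xstar \<bullet> (y - xstar)"
    using gradient_quadratic_growth by blast
  moreover have "convex (lp_ball p :: (real ^ 'm) set)"
    using p by (intro convex_lp_ball) simp
  ultimately interpret frank_wolfe_quadratic_growth f f' L "lp_ball p" x v \<gamma> xstar \<kappa>
    using grad cvx L smooth x0 lmo upd steps xstar_min(1) by unfold_locales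
  show ?thesis
    by (rule linear_convergence)
qed

end
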